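(* Let $k$ be a field, $A$ a $k$-algebra, $a_1,\ldots,a_m\in A$, $d\ge1$, and $M_{d,m}=\binom{d+m-1}{m}$. If $P_{\le M_{d,m}}(a_1,\ldots,a_m)\subseteq P_{\le d-1}(a_1,\ldots,a_m)$, then every element of the subspace $ka_1+\cdots+ka_m$ is algebraic over $k$ of degree at most $M_{d,m}$.
   Context: Algebras are associative with unit. For nonnegative integers $i_1,\ldots,i_m$, $p_{i_1,\ldots,i_m}(x_1,\ldots,x_m)$ is the sum of all distinct noncommutative monomials with exactly $i_j$ occurrences of $x_j$ for each $j$ ($p_{0,\ldots,0}=1$); $p_{i_1,\ldots,i_m}(a_1,\ldots,a_m)$ is its evaluation at $x_j=a_j$. $P_n(a_1,\ldots,a_m)=\operatorname{span}_k\{p_{i_1,\ldots,i_m}(a_1,\ldots,a_m)\mid i_1+\cdots+i_m=n\}$ and $P_{\le r}(a_1,\ldots,a_m)=\sum_{n=0}^rP_n(a_1,\ldots,a_m)$. Algebraic of degree at most $D$ means a root of a nonzero polynomial in $k[t]$ of degree at most $D$. *)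

theory Defs
  imports Main "HOL-Computational_Algebra.Polynomial"
begin

definition k_algebra :: "('a::field \<Rightarrow> 'b::ring_1 \<Rightarrow> 'b) \<Rightarrow> bool" where
  "k_algebra s \<longleftrightarrow> vector_space s \<and>
     (\<forall>c x y. s c (x * y) = s c x * y \<and> s c (x * y) = x * s c y)"

text \<open>Noncommutative monomials in x_0,...,x_(m-1) with exactly i j occurrences of x_j
  are the words w over {0..<m} with count_list w j = i j; their evaluation at x_j = a j
  is the product along the word.\<close>
definition monomials :: "nat \<Rightarrow> (nat \<Rightarrow> nat) \<Rightarrow> nat list set" where
  "monomials m i = {w. set w \<subseteq> {..<m} \<and> (\<forall>j<m. count_list w j = i j)}"

definition pev :: "nat \<Rightarrow> (nat \<Rightarrow> 'b::ring_1) \<Rightarrow> (nat \<Rightarrow> nat) \<Rightarrow> 'b" where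
  "pev m a i = (\<Sum>w\<in>monomials m i. prod_list (map a w))"

definition Pn :: "('a::field \<Rightarrow> 'b::ring_1 \<Rightarrow> 'b) \<Rightarrow> nat \<Rightarrow> (nat \<Rightarrow> 'b) \<Rightarrow> nat \<Rightarrow> 'b set" where
  "Pn s m a n = module.span s {pev m a i | i. (\<Sum>j<m. i j) = n}"

definition Ple :: "('a::field \<Rightarrow> 'b::ring_1 \<Rightarrow> 'b) \<Rightarrow> nat \<Rightarrow> (nat \<Rightarrow> 'b) \<Rightarrow> nat \<Rightarrow> 'b set" where
  "Ple s m a r = module.span s (\<Union>n\<in>{0..r}. Pn s m a n)"

definition alg_eval :: "('a::field \<Rightarrow> 'b::ring_1 \<Rightarrow> 'b) \<Rightarrow> 'a poly \<Rightarrow> 'b \<Rightarrow> 'b" where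
  "alg_eval s q x = (\<Sum>t\<le>degree q. s (coeff q t) (x ^ t))"

definition algebraic_deg_le :: "('a::field \<Rightarrow> 'b::ring_1 \<Rightarrow> 'b) \<Rightarrow> nat \<Rightarrow> 'b \<Rightarrow> bool" where
  "algebraic_deg_le s D x \<longleftrightarrow> (\<exists>q. q \<noteq> 0 \<and> degree q \<le> D \<and> alg_eval s q x = 0)"

end

theory Submission
  imports Defs
begin

text \<open>
  Write \<open>x = c\<^sub>1 a\<^sub>1 + \<dots> + c\<^sub>m a\<^sub>m\<close>. Expanding \<open>x\<^sup>n\<close> over words and collecting the words
  with the same exponent vector \<open>i\<close> gives a combination of the \<open>p\<^sub>i(a)\<close> with \<open>|i| = n\<close>,
  so \<open>x\<^sup>n \<in> P\<^sub>n \<subseteq> P\<^sub>\<le>\<^sub>M\<close> for all \<open>n \<le> M\<close>. By hypothesis these powers lie in \<open>P\<^sub>\<le>\<^sub>d\<^sub>-\<^sub>1\<close>, which is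
  spanned by the \<open>M\<close> elements \<open>p\<^sub>i(a)\<close> with \<open>|i| \<le> d - 1\<close>. Hence the \<open>M + 1\<close> powers
  \<open>1, x, \<dots>, x\<^sup>M\<close> satisfy a nontrivial linear relation, i.e. \<open>x\<close> is a root of a nonzero
  polynomial of degree at most \<open>M\<close>.
\<close>

lemma k_algebra_vector_space: "k_algebra s \<Longrightarrow> vector_space s"
  by (simp add: k_algebra_def)

lemma k_algebra_scale_mult:
  assumes "k_algebra s"
  shows "s c u * s e v = s (c * e) (u * v)"
proof -
  interpret vector_space s using assms by (rule k_algebra_vector_space)
  have comm: "s c (x * y) = s c x * y" "s c (x * y) = x * s c y" for c x y
    using assms unfolding k_algebra_def by blast+
  have "s c u * s e v = s c (u * s e v)" by (simp add: comm(1))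
  also have "u * s e v = s e (u * v)" by (simp add: comm(2))
  finally show ?thesis by simp
qed

lemma (in module) span_image_lessThanE:
  fixes a :: "nat \<Rightarrow> 'b"
  assumes "x \<in> span (a ` {..<m})"
  obtains c where "x = (\<Sum>j<m. c j *s a j)"
proof -
  have "\<exists>c. x = (\<Sum>j<m. c j *s a j)"
    using assms
  proof (induction rule: span_induct_alt)
    case base
    show ?case by (intro exI[of _ "\<lambda>_. 0"]) simp
  next
    case (step e v y)
    then obtain j0 c where j0: "j0 < m" "v = a j0" and c: "y = (\<Sum>j<m. c j *s a j)"
      by auto
    have "(\<Sum>j<m. (c(j0 := c j0 + e)) j *s a j)
        = (\<Sum>j<m. c j *s a j + (if j = j0 then e *s a j else 0))"
      by (rule sum.cong) (auto simp: scale_left_distrib)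
    also have "\<dots> = y + e *s v"
      unfolding sum.distrib c using j0 by (subst sum.delta) auto
    finally show ?case by (metis add.commute)
  qed
  then show ?thesis using that by blast
qed

lemma (in vector_space) nontrivial_relation_if_in_span_of_fewer:
  assumes "finite H" and "card H \<le> N" and "\<And>n. n \<le> N \<Longrightarrow> f n \<in> span H"
  obtains u n0 where "n0 \<le> N" "u n0 \<noteq> 0" "(\<Sum>n\<le>N. u n *s f n) = 0"
proof (cases "inj_on f {..N}")
  case False
  then obtain i j where ij: "i \<le> N" "j \<le> N" "i \<noteq> j" "f i = f j"
    unfolding inj_on_def by auto
  define u :: "nat \<Rightarrow> 'a" where "u n = (if n = i then 1 else 0) - (if n = j then 1 else 0)" for n
  have "(\<Sum>n\<le>N. u n *s f n) = (\<Sum>n\<le>N. (if n = i then f n else 0) - (if n = j then f n else 0))"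
    unfolding u_def by (intro sum.cong) (auto simp: scale_left_diff_distrib)
  also have "\<dots> = 0"
    using ij by (simp add: sum_subtractf)
  finally show ?thesis
    using that[of i u] ij by (simp add: u_def)
next
  case True
  have "card (f ` {..N}) = Suc N"
    using True by (simp add: card_image)
  then have "dependent (f ` {..N})"
    using independent_span_bound[OF assms(1), of "f ` {..N}"] assms by auto
  then obtain w where w: "\<exists>v\<in>f ` {..N}. w v \<noteq> 0" "(\<Sum>v\<in>f ` {..N}. w v *s v) = 0"
    by (auto simp: dependent_finite)
  from w(1) obtain n0 where "n0 \<le> N" "w (f n0) \<noteq> 0"
    by auto
  moreover have "(\<Sum>n\<le>N. w (f n) *s f n) = 0"
    using w(2) by (simp add: sum.reindex[OF True])
  ultimately show ?thesis
    using that[of n0 "w \<circ> f"] by simp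
qed

lemma algebraic_deg_le_if_powers_relation:
  assumes "vector_space s" and "n0 \<le> N" "u n0 \<noteq> 0"
    and "(\<Sum>n\<le>N. s (u n) (x ^ n)) = 0"
  shows "algebraic_deg_le s N x"
proof -
  interpret vector_space s by (rule assms(1))
  define q where "q = (\<Sum>n\<le>N. monom (u n) n)"
  have coeff_q: "coeff q n = (if n \<le> N then u n else 0)" for n
    unfolding q_def by (simp add: coeff_sum coeff_monom)
  have "q \<noteq> 0"
    using assms(2,3) coeff_q[of n0] by auto
  moreover have deg: "degree q \<le> N"
    by (rule degree_le) (simp add: coeff_q)
  moreover have "alg_eval s q x = (\<Sum>n\<le>N. s (coeff q n) (x ^ n))"
    unfolding alg_eval_def
    by (rule sum.mono_neutral_left) (use deg in \<open>auto simp: coeff_eq_0\<close>)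
  then have "alg_eval s q x = 0"
    using assms(4) by (simp add: coeff_q)
  ultimately show ?thesis
    unfolding algebraic_deg_le_def by blast
qed

lemma algebraic_deg_le_if_powers_in_span:
  assumes "vector_space s" and "finite H" "card H \<le> N"
    and "\<And>n. n \<le> N \<Longrightarrow> x ^ n \<in> module.span s H"
  shows "algebraic_deg_le s N x"
proof -
  interpret vector_space s by (rule assms(1))
  obtain u n0 where "n0 \<le> N" "u n0 \<noteq> 0" "(\<Sum>n\<le>N. s (u n) (x ^ n)) = 0"
    using nontrivial_relation_if_in_span_of_fewer[OF assms(2-4)] .
  then show ?thesis
    by (rule algebraic_deg_le_if_powers_relation[OF assms(1)])
qed

definition words :: "nat \<Rightarrow> nat \<Rightarrow> nat list set" where
  "words m n = {w. set w \<subseteq> {..<m} \<and> length w = n}"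

lemma finite_words: "finite (words m n)"
  unfolding words_def by (rule finite_lists_length_eq) simp

lemma words_Suc: "words m (Suc n) = (\<lambda>(j, w). j # w) ` ({..<m} \<times> words m n)"
  unfolding words_def by (auto simp: length_Suc_conv)

lemma power_sum_scale_eq_sum_words:
  assumes "k_algebra s"
  shows "(\<Sum>j<m. s (c j) (a j)) ^ n
    = (\<Sum>w\<in>words m n. s (prod_list (map c w)) (prod_list (map a w)))"
proof (induction n)
  case 0
  interpret vector_space s using assms by (rule k_algebra_vector_space)
  have "words m 0 = {[]}" unfolding words_def by auto
  then show ?case by simp
next
  case (Suc n)
  have inj: "inj_on (\<lambda>(j, w). j # w) ({..<m} \<times> words m n)"
    by (auto simp: inj_on_def)
  have "(\<Sum>j<m. s (c j) (a j)) ^ Suc n = (\<Sum>j<m. s (c j) (a j)) * (\<Sum>j<m. s (c j) (a j)) ^ n"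
    by simp
  also have "\<dots> = (\<Sum>j<m. \<Sum>w\<in>words m n.
      s (c j) (a j) * s (prod_list (map c w)) (prod_list (map a w)))"
    unfolding Suc sum_distrib_right sum_distrib_left by (rule sum.swap)
  also have "\<dots> = (\<Sum>(j, w)\<in>{..<m} \<times> words m n.
      s (prod_list (map c (j # w))) (prod_list (map a (j # w))))"
    by (simp add: sum.cartesian_product k_algebra_scale_mult[OF assms])
  also have "\<dots> = (\<Sum>w\<in>words m (Suc n). s (prod_list (map c w)) (prod_list (map a w)))"
    unfolding words_Suc by (subst sum.reindex[OF inj]) (simp add: case_prod_beta')
  finally show ?case .
qed

lemma prod_list_map_eq_prod_power_count_list:
  fixes c :: "'b \<Rightarrow> 'a::comm_monoid_mult"
  assumes "set w \<subseteq> A" "finite A"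
  shows "prod_list (map c w) = (\<Prod>j\<in>A. c j ^ count_list w j)"
  using assms(1)
proof (induction w)
  case (Cons x w)
  have "(\<Prod>j\<in>A - {x}. c j ^ count_list (x # w) j) = (\<Prod>j\<in>A - {x}. c j ^ count_list w j)"
    by (rule prod.cong) auto
  with Cons show ?case
    by (simp add: prod.remove[OF assms(2), of x] mult.assoc)
qed simp

lemma monomials_eq_words_count_list:
  assumes "(\<Sum>j<m. i j) = n"
  shows "monomials m i = {w \<in> words m n. \<forall>j<m. count_list w j = i j}"
proof -
  have "length w = n" if "set w \<subseteq> {..<m}" "\<forall>j<m. count_list w j = i j" for w
  proof -
    have "length w = (\<Sum>j<m. count_list w j)"
      using sum_count_set[OF that(1)] by simp
    also have "\<dots> = n"
      using that(2) assms by simp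
    finally show ?thesis .
  qed
  then show ?thesis
    unfolding monomials_def words_def by auto
qed

lemma sum_monomials_scale:
  assumes "vector_space s"
  shows "(\<Sum>w\<in>monomials m i. s (prod_list (map c w)) (prod_list (map a w)))
    = s (\<Prod>j<m. c j ^ i j) (pev m a i)"
proof -
  interpret vector_space s by (rule assms)
  have "(\<Sum>w\<in>monomials m i. s (prod_list (map c w)) (prod_list (map a w)))
      = (\<Sum>w\<in>monomials m i. s (\<Prod>j<m. c j ^ i j) (prod_list (map a w)))"
    by (rule sum.cong)
      (auto simp: monomials_def prod_list_map_eq_prod_power_count_list[of _ "{..<m}"])
  then show ?thesis
    by (simp add: pev_def scale_sum_right)
qed

text \<open>Grouping the words of length \<open>n\<close> by their exponent vector (extended by zero
  beyond \<open>m\<close>, so that the groups are indexed by functions).\<close>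
lemma power_sum_scale_in_Pn:
  assumes "k_algebra s"
  shows "(\<Sum>j<m. s (c j) (a j)) ^ n \<in> Pn s m a n"
proof -
  interpret vector_space s using assms by (rule k_algebra_vector_space)
  define expo where "expo w = (\<lambda>j. if j < m then count_list w j else 0)" for w
  define f where "f w = s (prod_list (map c w)) (prod_list (map a w))" for w
  have "(\<Sum>j<m. s (c j) (a j)) ^ n = (\<Sum>i\<in>expo ` words m n. \<Sum>w\<in>{w \<in> words m n. expo w = i}. f w)"
    unfolding power_sum_scale_eq_sum_words[OF assms] f_def
    by (rule sum.group[symmetric]) (auto simp: finite_words)
  also have "\<dots> \<in> Pn s m a n"
    unfolding Pn_def
  proof (rule span_sum)
    fix i assume "i \<in> expo ` words m n"
    then obtain w0 where w0: "w0 \<in> words m n" "i = expo w0" by blast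
    then have "(\<Sum>j<m. i j) = n"
      using sum_count_set[of w0 "{..<m}"] by (simp add: expo_def words_def)
    moreover have "{w \<in> words m n. expo w = i} = {w \<in> words m n. \<forall>j<m. count_list w j = i j}"
      using w0(2) by (auto simp: expo_def fun_eq_iff)
    ultimately have "(\<Sum>w\<in>{w \<in> words m n. expo w = i}. f w) = s (\<Prod>j<m. c j ^ i j) (pev m a i)"
      unfolding f_def
      by (simp add: monomials_eq_words_count_list sum_monomials_scale[OF vector_space_axioms, symmetric])
    moreover have "pev m a i \<in> {pev m a i |i. (\<Sum>j<m. i j) = n}"
      using \<open>(\<Sum>j<m. i j) = n\<close> by blast
    ultimately show "(\<Sum>w\<in>{w \<in> words m n. expo w = i}. f w) \<in> span {pev m a i |i. (\<Sum>j<m. i j) = n}"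
      by (simp add: span_scale span_base)
  qed
  finally show ?thesis .
qed

lemma Pn_subset_Ple:
  assumes "vector_space s" "n \<le> r"
  shows "Pn s m a n \<subseteq> Ple s m a r"
proof -
  interpret vector_space s by (rule assms(1))
  show ?thesis
    using assms(2) span_superset unfolding Ple_def by fastforce
qed

lemma finite_lists_sum_list_le: "finite {l :: nat list. length l = m \<and> sum_list l \<le> r}"
  by (rule finite_subset[OF _ finite_lists_length_eq[of "{..r}" m]])
    (auto dest: member_le_sum_list)

lemma card_lists_sum_list_le:
  "card {l :: nat list. length l = m \<and> sum_list l \<le> r} = (r + m) choose m"
proof -
  have "{l :: nat list. length l = m \<and> sum_list l \<le> r}
      = (\<Union>n\<le>r. {l. length l = m \<and> sum_list l = n})"
    by auto
  also have "card \<dots> = (\<Sum>n\<le>r. card {l :: nat list. length l = m \<and> sum_list l = n})"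
  proof -
    have "finite {l :: nat list. length l = m \<and> sum_list l = n}" for n
      by (rule finite_subset[OF _ finite_lists_sum_list_le[of m n]]) auto
    then show ?thesis
      by (intro card_UN_disjoint) auto
  qed
  also have "\<dots> = (\<Sum>n\<le>r. (n + m - 1) choose n)"
    by (simp add: card_length_sum_list)
  also have "\<dots> = (r + m) choose m"
  proof (cases m)
    case 0
    then have "(\<Sum>n\<le>r. (n + m - 1) choose n) = (\<Sum>n\<le>r. if n = 0 then 1 else 0)"
      by (intro sum.cong) auto
    then show ?thesis
      using 0 by simp
  next
    case (Suc k)
    have "(\<Sum>n\<le>r. (n + m - 1) choose n) = (\<Sum>n\<le>r. (k + n) choose n)"
      using Suc by (simp add: add.commute)
    also have "\<dots> = Suc (k + r) choose r"
      by (rule sum_choose_lower)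
    also have "\<dots> = Suc (k + r) choose Suc k"
      by (subst binomial_symmetric) auto
    finally show ?thesis using Suc by (simp add: add.commute)
  qed
  finally show ?thesis .
qed

text \<open>Exponent vectors \<open>i\<close> with \<open>|i| \<le> r\<close> are encoded as lists of length \<open>m\<close>.\<close>
lemma Ple_subset_span_pev_lists:
  assumes "vector_space s"
  shows "Ple s m a r
    \<subseteq> module.span s ((\<lambda>l. pev m a ((!) l)) ` {l. length l = m \<and> sum_list l \<le> r})"
    (is "_ \<subseteq> module.span s ?H")
proof -
  interpret vector_space s by (rule assms)
  have "pev m a i \<in> ?H" if "(\<Sum>j<m. i j) \<le> r" for i
  proof -
    define l where "l = map i [0..<m]"
    have "sum_list l = (\<Sum>j<m. i j)"
      unfolding l_def by (simp add: sum_list_sum_nth atLeast0LessThan)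
    moreover have "pev m a i = pev m a ((!) l)"
      unfolding pev_def monomials_def l_def by simp
    ultimately show ?thesis
      using that unfolding l_def by force
  qed
  then have Pn_H: "Pn s m a n \<subseteq> span ?H" if "n \<le> r" for n
    unfolding Pn_def using that by (intro span_minimal) (auto intro: span_base)
  show ?thesis
    unfolding Ple_def by (intro span_minimal subspace_span UN_least Pn_H) simp
qed

theorem lemma3p5:
  fixes s :: "'a::field \<Rightarrow> 'b::ring_1 \<Rightarrow> 'b"
    and a :: "nat \<Rightarrow> 'b" and m d :: nat
  assumes "k_algebra s"
    and "d \<ge> 1"
    and "Ple s m a ((d + m - 1) choose m) \<subseteq> Ple s m a (d - 1)"
  shows "\<forall>x\<in>module.span s (a ` {..<m}). algebraic_deg_le s ((d + m - 1) choose m) x"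
proof
  interpret vector_space s using assms(1) by (rule k_algebra_vector_space)
  let ?M = "(d + m - 1) choose m"
  let ?L = "{l :: nat list. length l = m \<and> sum_list l \<le> d - 1}"
  define H where "H = (\<lambda>l. pev m a ((!) l)) ` ?L"
  have Ple_H: "Ple s m a (d - 1) \<subseteq> span H"
    unfolding H_def by (rule Ple_subset_span_pev_lists[OF vector_space_axioms])
  have "card H \<le> card ?L"
    unfolding H_def by (rule card_image_le[OF finite_lists_sum_list_le])
  also have "card ?L = ?M"
    using assms(2) by (simp add: card_lists_sum_list_le add.commute)
  finally have card_H: "card H \<le> ?M" .
  fix x assume "x \<in> span (a ` {..<m})"
  then obtain c where x: "x = (\<Sum>j<m. s (c j) (a j))"
    by (rule span_image_lessThanE)
  have "x ^ n \<in> span H" if "n \<le> ?M" for n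
  proof -
    have "x ^ n \<in> Pn s m a n"
      unfolding x by (rule power_sum_scale_in_Pn[OF assms(1)])
    also have "\<dots> \<subseteq> Ple s m a ?M"
      by (rule Pn_subset_Ple[OF vector_space_axioms that])
    finally show ?thesis
      using assms(3) Ple_H by blast
  qed
  then show "algebraic_deg_le s ?M x"
    by (intro algebraic_deg_le_if_powers_in_span[OF vector_space_axioms _ card_H])
      (simp_all add: H_def finite_lists_sum_list_le)
qed

end
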